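(* Let $\ell>0$, $T>0$, let $a_1,a_2$ be constants with $a_1,a_2\ge\underline a>0$, and let $u_0\in L^2(0,\ell)$, $u_0\ne0$. For $i=1,2$ let $u_i\in C^0([0,T];L^2(0,\ell))$ be the solution of $$\partial_t u_i-a_i\,\partial_x(x\,\partial_x u_i)=0\ \text{ in }(0,\ell)\times(0,T),\quad x\,\partial_x u_i(x,t)|_{x=0}=0,\ u_i(\ell,t)=0,\quad u_i(x,0)=u_0(x).$$ If for some $t_0\in(0,T]$ we have $\partial_t u_1(x,t_0)=\partial_t u_2(x,t_0)$ and $\partial_x u_1(x,t_0)=\partial_x u_2(x,t_0)$ for all $x\in(0,\ell)$, then $a_1=a_2$.
   Context: Solutions are the semigroup solutions $u_i(t)=e^{tA_i}u_0$, where $A_i u=a_i\,\partial_x(x\partial_x u)$ on $D(A_i)=\{u\in L^2(0,\ell):\int_0^\ell x|\partial_xu|^2dx<\infty,\ u(\ell)=0,\ x\partial_x u\in H^1(0,\ell)\}$ generates an analytic contraction semigroup on $L^2(0,\ell)$. *)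

theory Defs
  imports "HOL-Analysis.Analysis"
begin

definition L2 :: "real \<Rightarrow> (real \<Rightarrow> real) \<Rightarrow> bool" where
  "L2 l f \<longleftrightarrow> set_borel_measurable lborel {0<..<l} f
              \<and> set_integrable lborel {0<..<l} (\<lambda>x. (f x)\<^sup>2)"

definition sqL2 :: "real \<Rightarrow> (real \<Rightarrow> real) \<Rightarrow> real" where
  "sqL2 l f = (LINT x:{0<..<l}|lborel. (f x)\<^sup>2)"

text \<open>f belongs to D(A) (taking its continuous representative on (0,l]) and
  h represents the weak derivative of x f'(x), i.e. (x f')' = h in L2(0,l).
  The condition x f' in H1(0,l) is expressed in the 1D way: x f' is in L2 and
  is the integral of an L2 function h.\<close>
definition domA :: "real \<Rightarrow> (real \<Rightarrow> real) \<Rightarrow> (real \<Rightarrow> real) \<Rightarrow> bool" where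
  "domA l f h \<longleftrightarrow> L2 l f \<and> L2 l h
     \<and> (\<forall>x\<in>{0<..<l}. f differentiable (at x))
     \<and> continuous (at_left l) f \<and> f l = 0
     \<and> set_integrable lborel {0<..<l} (\<lambda>x. x * (deriv f x)\<^sup>2)
     \<and> L2 l (\<lambda>x. x * deriv f x)
     \<and> (\<forall>x y. 0 < x \<longrightarrow> x \<le> y \<longrightarrow> y < l \<longrightarrow>
           y * deriv f y - x * deriv f x = (LINT s:{x..y}|lborel. h s))"

definition L2_has_deriv ::
  "real \<Rightarrow> real \<Rightarrow> (real \<Rightarrow> real \<Rightarrow> real) \<Rightarrow> real \<Rightarrow> (real \<Rightarrow> real) \<Rightarrow> bool" where
  "L2_has_deriv l T u t v \<longleftrightarrow> L2 l v \<and>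
     ((\<lambda>s. sqL2 l (\<lambda>x. (u s x - u t x) / (s - t) - v x)) \<longlongrightarrow> 0) (at t within {0..T})"

text \<open>u (as t \<mapsto> u t) is the (strong/semigroup) solution of
  u_t = a (x u_x)_x on (0,l) x (0,T], x u_x|_{x=0} = 0, u(l,t) = 0, u(.,0) = u0:
  u in C0([0,T];L2), u(t) in D(A) and u'(t) = A u(t) in L2 for t in (0,T].\<close>
definition heat_sol ::
  "real \<Rightarrow> real \<Rightarrow> real \<Rightarrow> (real \<Rightarrow> real) \<Rightarrow> (real \<Rightarrow> real \<Rightarrow> real) \<Rightarrow> bool" where
  "heat_sol l T a u0 u \<longleftrightarrow>
     (\<forall>t\<in>{0..T}. L2 l (u t))
   \<and> (\<forall>t\<in>{0..T}. ((\<lambda>s. sqL2 l (\<lambda>x. u s x - u t x)) \<longlongrightarrow> 0) (at t within {0..T}))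
   \<and> (AE x in lborel. x \<in> {0<..<l} \<longrightarrow> u 0 x = u0 x)
   \<and> (\<forall>t\<in>{0<..T}. \<exists>h. domA l (u t) h \<and> L2_has_deriv l T u t (\<lambda>x. a * h x))"

end

theory Submission
  imports Defs "HOL-Real_Asymp.Real_Asymp"
begin

text \<open>Suppose a1 \<noteq> a2. At time t0 both solutions have the same time derivative
  v = a1 (x u1')' = a2 (x u2')' and the same flux x u1' = x u2', so the increments of the flux
  satisfy (x u1')' = (a1/a2) (x u1')' and the flux is a constant C. Integrability of
  x (u1')^2 = C^2/x near 0 forces C = 0, and u1(l) = 0 then gives u1(t0) = 0.
  The generator is symmetric (Green's formula, the boundary terms vanishing at 0 because the
  flux is O(sqrt x) while u grows at most logarithmically), so r \<mapsto> (u(r), u(c - r)) is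
  constant on [0, c]; hence u(c) = 0 implies u(c/2) = 0, and letting c/2^n tend to 0 gives
  u0 = 0, a contradiction.\<close>

section \<open>Elementary real analysis\<close>

lemma set_integral_mono_subset:
  fixes f :: "'a \<Rightarrow> real"
  assumes "set_integrable M B f" "A \<in> sets M" "A \<subseteq> B" "\<And>x. x \<in> B \<Longrightarrow> 0 \<le> f x"
  shows "(LINT x:A|M. f x) \<le> (LINT x:B|M. f x)"
  using set_integrable_subset[OF assms(1-3)] assms(1) assms(3,4)
  unfolding set_lebesgue_integral_def set_integrable_def
  by (intro integral_mono) (auto simp: indicator_def)

lemma set_integral_inverse_Icc:
  fixes a b :: real
  assumes "0 < a" "a \<le> b"
  shows "(LINT x:{a..b}|lborel. 1 / x) = ln b - ln a"
proof -
  have "integral\<^sup>L lborel (\<lambda>x. indicator {a .. b} x *\<^sub>R (1 / x)) = ln b - ln a"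
  proof (rule integral_FTC_atLeastAtMost[OF assms(2)])
    fix x assume "a \<le> x" "x \<le> b"
    then have "(ln has_real_derivative 1 / x) (at x)"
      using assms by (auto intro!: derivative_eq_intros)
    then show "(ln has_vector_derivative 1 / x) (at x within {a..b})"
      by (simp add: has_real_derivative_iff_has_vector_derivative has_vector_derivative_at_within)
  next
    show "continuous_on {a..b} (\<lambda>x. 1 / x :: real)"
      using assms by (intro continuous_intros) auto
  qed
  then show ?thesis by (simp add: set_lebesgue_integral_def)
qed

lemma set_integrable_inverse_Icc:
  "0 < a \<Longrightarrow> set_integrable lborel {a..b} (\<lambda>x. 1 / x :: real)"
  by (intro borel_integrable_atLeastAtMost' continuous_intros) auto

lemma inverse_le_set_integrable_imp_nonpos:
  fixes F :: "real \<Rightarrow> real"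
  assumes "0 < d" "set_integrable lborel {0<..<d} F"
    and F_ge: "\<And>x. 0 < x \<Longrightarrow> x < d \<Longrightarrow> c / x \<le> F x"
  shows "c \<le> 0"
proof (rule ccontr)
  assume "\<not> c \<le> 0"
  then have "0 < c" by simp
  define I where "I = (LINT x:{0<..<d}|lborel. F x)"
  have log_le: "c * (ln (d/2) - ln e) \<le> I" if "0 < e" "e \<le> d/2" for e
  proof -
    have "c * (ln (d/2) - ln e) = c * (LINT x:{e..d/2}|lborel. 1 / x)"
      by (simp only: set_integral_inverse_Icc[OF that])
    also have "\<dots> = (LINT x:{e..d/2}|lborel. c * (1 / x))"
      by (rule set_integral_mult_right[symmetric])
    also have "\<dots> \<le> (LINT x:{e..d/2}|lborel. F x)"
    proof (rule set_integral_mono)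
      show "set_integrable lborel {e..d/2} (\<lambda>x. c * (1 / x))"
        using set_integrable_inverse_Icc[OF that(1)] by (rule set_integrable_mult_right)
      show "set_integrable lborel {e..d/2} F"
        by (rule set_integrable_subset[OF assms(2)]) (use that assms in auto)
      show "c * (1 / x) \<le> F x" if "x \<in> {e..d/2}" for x
        using F_ge[of x] that \<open>0 < e\<close> assms(1) by auto
    qed
    also have "\<dots> \<le> I" unfolding I_def
    proof (rule set_integral_mono_subset[OF assms(2)])
      show "{e..d/2} \<subseteq> {0<..<d}" using that assms by auto
      show "0 \<le> F x" if "x \<in> {0<..<d}" for x
        using F_ge[of x] that divide_pos_pos[OF \<open>0 < c\<close>, of x] by auto
    qed simp
    finally show ?thesis .
  qed
  define e where "e = (d/2) * exp (- (\<bar>I\<bar> + 1) / c)"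
  have "0 < e" using assms by (simp add: e_def)
  have "exp (- (\<bar>I\<bar> + 1) / c) \<le> 1" using \<open>0 < c\<close> by (simp add: divide_nonpos_pos)
  then have "e \<le> d/2" using assms unfolding e_def by (simp add: mult_left_le)
  have "ln e = ln (d/2) + ln (exp (- (\<bar>I\<bar> + 1) / c))"
    unfolding e_def using assms by (intro ln_mult_pos) auto
  then have "ln e = ln (d/2) - (\<bar>I\<bar> + 1) / c" using \<open>0 < c\<close> by (simp add: field_simps)
  then have "c * (ln (d/2) - ln e) = \<bar>I\<bar> + 1" using \<open>0 < c\<close> by simp
  then show False using log_le[OF \<open>0 < e\<close> \<open>e \<le> d/2\<close>] by simp
qed

lemma abs_le_AM_GM_inverse:
  fixes s d :: real
  assumes "0 < s"
  shows "\<bar>d\<bar> \<le> (s * d\<^sup>2 + 1 / s) / 2"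
proof -
  have "2 * s * \<bar>d\<bar> \<le> s\<^sup>2 * d\<^sup>2 + 1"
    using zero_le_power2[of "s * \<bar>d\<bar> - 1"] by (simp add: power2_eq_square algebra_simps)
  then show ?thesis using assms by (simp add: field_simps power2_eq_square)
qed

lemma integral_triangle_swap:
  fixes H D :: "real \<Rightarrow> real"
  assumes "integrable lborel (\<lambda>s. indicator {x..y} s * H s)"
    and "integrable lborel (\<lambda>r. indicator {x..y} r * D r)"
  shows "(\<integral>s. indicator {x..y} s * (H s * (\<integral>r. indicator {s..y} r * D r \<partial>lborel)) \<partial>lborel)
       = (\<integral>r. indicator {x..y} r * (D r * (\<integral>s. indicator {x..r} s * H s \<partial>lborel)) \<partial>lborel)"
proof -
  define H' where "H' s = indicator {x..y} s * H s" for s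
  define D' where "D' r = indicator {x..y} r * D r" for r
  have iH: "integrable lborel H'" and iD: "integrable lborel D'"
    using assms by (simp_all add: H'_def[abs_def] D'_def[abs_def])
  note [measurable] = borel_measurable_integrable[OF iH] borel_measurable_integrable[OF iD]
  define F where "F s r = (if s \<le> r then H' s * D' r else 0)" for s r
  have iHD: "integrable (lborel \<Otimes>\<^sub>M lborel) (\<lambda>(s, r). \<bar>H' s\<bar> * \<bar>D' r\<bar>)"
  proof (rule lborel_pair.Fubini_integrable)
    show "(\<lambda>(s, r). \<bar>H' s\<bar> * \<bar>D' r\<bar>) \<in> borel_measurable (lborel \<Otimes>\<^sub>M lborel)" by measurable
    have "integrable lborel (\<lambda>s. \<bar>H' s\<bar> * (\<integral>r. \<bar>D' r\<bar> \<partial>lborel))"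
      using iH by (intro integrable_mult_left integrable_abs)
    then show "integrable lborel (\<lambda>s. \<integral>r. norm (case (s, r) of (s, r) \<Rightarrow> \<bar>H' s\<bar> * \<bar>D' r\<bar>) \<partial>lborel)"
      by (simp add: abs_mult)
    show "AE s in lborel. integrable lborel (\<lambda>r. case (s, r) of (s, r) \<Rightarrow> \<bar>H' s\<bar> * \<bar>D' r\<bar>)"
      using iD by (intro AE_I2) (simp add: integrable_abs)
  qed
  have iF: "integrable (lborel \<Otimes>\<^sub>M lborel) (\<lambda>(s, r). F s r)"
  proof (rule Bochner_Integration.integrable_bound[OF iHD])
    show "(\<lambda>(s, r). F s r) \<in> borel_measurable (lborel \<Otimes>\<^sub>M lborel)"
      unfolding F_def by measurable
    show "AE p in lborel \<Otimes>\<^sub>M lborel. norm (case p of (s, r) \<Rightarrow> F s r)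
        \<le> norm (case p of (s, r) \<Rightarrow> \<bar>H' s\<bar> * \<bar>D' r\<bar>)"
      by (intro AE_I2) (auto simp: F_def abs_mult)
  qed
  have "F s r = indicator {x..y} s * H s * (indicator {s..y} r * D r)" for s r
    by (auto simp: F_def H'_def D'_def indicator_def)
  then have "(\<lambda>s. \<integral>r. F s r \<partial>lborel)
      = (\<lambda>s. indicator {x..y} s * (H s * (\<integral>r. indicator {s..y} r * D r \<partial>lborel)))"
    by (simp add: mult.assoc)
  moreover have "F s r = indicator {x..y} r * D r * (indicator {x..r} s * H s)" for s r
    by (auto simp: F_def H'_def D'_def indicator_def)
  then have "(\<lambda>r. \<integral>s. F s r \<partial>lborel)
      = (\<lambda>r. indicator {x..y} r * (D r * (\<integral>s. indicator {x..r} s * H s \<partial>lborel)))"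
    by (simp add: mult.assoc)
  moreover have "(\<integral>s. (\<integral>r. F s r \<partial>lborel) \<partial>lborel) = (\<integral>r. (\<integral>s. F s r \<partial>lborel) \<partial>lborel)"
    using lborel_pair.integral_fst[OF iF] lborel_pair.integral_snd[OF iF] by simp
  ultimately show ?thesis by simp
qed

lemma set_integral_Icc_tendsto_Ioo:
  fixes F :: "real \<Rightarrow> real"
  assumes F: "set_integrable lborel {a<..<b} F"
    and lim: "xs \<longlonglongrightarrow> a" "ys \<longlonglongrightarrow> b" and bounds: "\<And>n. a < xs n" "\<And>n. ys n < b"
  shows "(\<lambda>n. LINT s:{xs n..ys n}|lborel. F s) \<longlonglongrightarrow> (LINT s:{a<..<b}|lborel. F s)"
  unfolding set_lebesgue_integral_def
proof (rule integral_dominated_convergence[where w = "\<lambda>z. \<bar>indicator {a<..<b} z *\<^sub>R F z\<bar>"])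
  show m: "(\<lambda>z. indicator {a<..<b} z *\<^sub>R F z) \<in> borel_measurable lborel"
    using F unfolding set_integrable_def by (rule borel_measurable_integrable)
  have eq: "indicator {xs n..ys n} z *\<^sub>R F z = indicator {xs n..ys n} z * (indicator {a<..<b} z *\<^sub>R F z)"
    for n z
    using bounds[of n] by (auto simp: indicator_def)
  show "(\<lambda>z. indicator {xs n..ys n} z *\<^sub>R F z) \<in> borel_measurable lborel" for n
    unfolding eq using m by measurable
  show "integrable lborel (\<lambda>z. \<bar>indicator {a<..<b} z *\<^sub>R F z\<bar>)"
    using F unfolding set_integrable_def by (rule integrable_abs)
  show "AE z in lborel. norm (indicator {xs n..ys n} z *\<^sub>R F z) \<le> \<bar>indicator {a<..<b} z *\<^sub>R F z\<bar>" for n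
    unfolding eq by (intro AE_I2) (simp add: indicator_def)
  show "AE z in lborel. (\<lambda>n. indicator {xs n..ys n} z *\<^sub>R F z) \<longlonglongrightarrow> indicator {a<..<b} z *\<^sub>R F z"
  proof (rule AE_I2)
    fix z :: real
    show "(\<lambda>n. indicator {xs n..ys n} z *\<^sub>R F z) \<longlonglongrightarrow> indicator {a<..<b} z *\<^sub>R F z"
    proof (cases "z \<in> {a<..<b}")
      case True
      then have "eventually (\<lambda>n. xs n < z) sequentially" "eventually (\<lambda>n. z < ys n) sequentially"
        using order_tendstoD(2)[OF lim(1), of z] order_tendstoD(1)[OF lim(2), of z] by auto
      then have "eventually (\<lambda>n. indicator {xs n..ys n} z *\<^sub>R F z = indicator {a<..<b} z *\<^sub>R F z) sequentially"
        by eventually_elim (use True in \<open>auto simp: indicator_def\<close>)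
      then show ?thesis by (rule tendsto_eventually)
    next
      case False
      then show ?thesis unfolding eq by simp
    qed
  qed
qed

lemma filterlim_diff_left_at_within:
  fixes c r :: real
  assumes "\<And>s. s \<in> S \<Longrightarrow> c - s \<in> S'"
  shows "filterlim (\<lambda>s. c - s) (at (c - r) within S') (at r within S)"
  unfolding filterlim_at
proof
  show "eventually (\<lambda>s. c - s \<in> S' \<and> c - s \<noteq> c - r) (at r within S)"
    unfolding eventually_at_filter using assms by (intro always_eventually) auto
  show "((\<lambda>s. c - s) \<longlongrightarrow> c - r) (at r within S)" by (intro tendsto_intros)
qed

section \<open>Square-integrable functions on a set\<close>

lemma integrable_mult_if_square_integrable:
  fixes f g :: "'a \<Rightarrow> real"
  assumes [measurable]: "f \<in> borel_measurable M" "g \<in> borel_measurable M"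
    and "integrable M (\<lambda>x. (f x)\<^sup>2)" "integrable M (\<lambda>x. (g x)\<^sup>2)"
  shows "integrable M (\<lambda>x. f x * g x)"
proof (rule Bochner_Integration.integrable_bound)
  show "integrable M (\<lambda>x. ((f x)\<^sup>2 + (g x)\<^sup>2) / 2)" using assms by auto
  show "(\<lambda>x. f x * g x) \<in> borel_measurable M" by measurable
  have "norm (f x * g x) \<le> norm (((f x)\<^sup>2 + (g x)\<^sup>2) / 2)" for x
    using zero_le_power2[of "\<bar>f x\<bar> - \<bar>g x\<bar>"] by (simp add: power2_eq_square abs_mult algebra_simps)
  then show "AE x in M. norm (f x * g x) \<le> norm (((f x)\<^sup>2 + (g x)\<^sup>2) / 2)"
    by (intro AE_I2)
qed

lemma Cauchy_Schwarz_integral: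
  fixes f g :: "'a \<Rightarrow> real"
  assumes [measurable]: "f \<in> borel_measurable M" "g \<in> borel_measurable M"
    and f2: "integrable M (\<lambda>x. (f x)\<^sup>2)" and g2: "integrable M (\<lambda>x. (g x)\<^sup>2)"
  shows "(\<integral>x. f x * g x \<partial>M)\<^sup>2 \<le> (\<integral>x. (f x)\<^sup>2 \<partial>M) * (\<integral>x. (g x)\<^sup>2 \<partial>M)"
proof -
  define A where "A = (\<integral>x. (f x)\<^sup>2 \<partial>M)"
  define B where "B = (\<integral>x. (g x)\<^sup>2 \<partial>M)"
  define C where "C = (\<integral>x. f x * g x \<partial>M)"
  have fg: "integrable M (\<lambda>x. f x * g x)"
    using integrable_mult_if_square_integrable[OF assms] .
  have quadratic_nonneg: "0 \<le> A + 2 * t * C + t\<^sup>2 * B" for t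
  proof -
    have "0 \<le> (\<integral>x. (f x + t * g x)\<^sup>2 \<partial>M)" by simp
    also have "\<dots> = (\<integral>x. (f x)\<^sup>2 + (2 * t) * (f x * g x) + t\<^sup>2 * (g x)\<^sup>2 \<partial>M)"
      by (simp add: power2_eq_square algebra_simps)
    also have "\<dots> = A + 2 * t * C + t\<^sup>2 * B"
      using f2 g2 fg by (simp add: A_def B_def C_def)
    finally show ?thesis .
  qed
  have "0 \<le> B" unfolding B_def by simp
  show ?thesis
  proof (cases "B = 0")
    case True
    have "C = 0"
    proof (rule ccontr)
      assume "C \<noteq> 0"
      have "0 \<le> A + 2 * (-(A+1)/(2*C)) * C" using quadratic_nonneg[of "-(A+1)/(2*C)"] True by simp
      also have "\<dots> = -1" using \<open>C \<noteq> 0\<close> by (simp add: field_simps)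
      finally show False by simp
    qed
    then show ?thesis using True by (simp add: A_def B_def C_def[symmetric])
  next
    case False
    with \<open>0 \<le> B\<close> have "B > 0" by simp
    have "0 \<le> A + 2 * (-C/B) * C + (-C/B)\<^sup>2 * B" by (rule quadratic_nonneg)
    also have "\<dots> = A - C\<^sup>2 / B" using \<open>B > 0\<close> by (simp add: field_simps power2_eq_square)
    finally have "C\<^sup>2 \<le> A * B" using \<open>B > 0\<close> by (simp add: field_simps)
    then show ?thesis by (simp add: A_def B_def C_def)
  qed
qed

definition L2_on :: "real set \<Rightarrow> (real \<Rightarrow> real) \<Rightarrow> bool" where
  "L2_on S f \<longleftrightarrow> set_borel_measurable lborel S f \<and> set_integrable lborel S (\<lambda>x. (f x)\<^sup>2)"

lemma L2_iff_L2_on: "L2 l f \<longleftrightarrow> L2_on {0<..<l} f"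
  by (simp add: L2_def L2_on_def)

lemma indicator_mult_square: "indicator S x * (f x)\<^sup>2 = (indicator S x * f x)\<^sup>2"
  for f :: "real \<Rightarrow> real"
  by (simp add: indicator_def)

lemma indicator_mult_mult:
  "indicator S x * (f x * g x) = (indicator S x * f x) * (indicator S x * g x)"
  for f g :: "real \<Rightarrow> real"
  by (simp add: indicator_def)

lemma L2_on_iff_indicator:
  "L2_on S f \<longleftrightarrow> (\<lambda>x. indicator S x * f x) \<in> borel_measurable lborel
     \<and> integrable lborel (\<lambda>x. (indicator S x * f x)\<^sup>2)"
  unfolding L2_on_def set_borel_measurable_def set_integrable_def
  by (simp add: indicator_mult_square)

lemmas L2_on_D = L2_on_iff_indicator[THEN iffD1, THEN conjunct1]
  L2_on_iff_indicator[THEN iffD1, THEN conjunct2]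

lemma L2_on_set_integrable_mult:
  assumes "L2_on S f" "L2_on S g"
  shows "set_integrable lborel S (\<lambda>x. f x * g x)"
  using integrable_mult_if_square_integrable[OF L2_on_D(1)[OF assms(1)] L2_on_D(1)[OF assms(2)]
      L2_on_D(2)[OF assms(1)] L2_on_D(2)[OF assms(2)]]
  unfolding set_integrable_def by (simp add: indicator_mult_mult)

lemma L2_on_lincomb:
  assumes "L2_on S f" "L2_on S g"
  shows "L2_on S (\<lambda>x. a * f x + b * g x)"
  unfolding L2_on_iff_indicator
proof
  note [measurable] = L2_on_D(1)[OF assms(1)] L2_on_D(1)[OF assms(2)]
  define F where "F x = indicator S x * f x" for x
  define G where "G x = indicator S x * g x" for x
  have [measurable]: "F \<in> borel_measurable lborel" "G \<in> borel_measurable lborel"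
    unfolding F_def[abs_def] G_def[abs_def] by measurable
  have restrict: "indicator S x * (a * f x + b * g x) = a * F x + b * G x" for x
    by (simp add: F_def G_def algebra_simps)
  show "(\<lambda>x. indicator S x * (a * f x + b * g x)) \<in> borel_measurable lborel"
    unfolding restrict by measurable
  have "integrable lborel (\<lambda>x. a\<^sup>2 * (F x)\<^sup>2 + 2 * a * b * (F x * G x) + b\<^sup>2 * (G x)\<^sup>2)"
    using L2_on_D(2)[OF assms(1)] L2_on_D(2)[OF assms(2)]
      integrable_mult_if_square_integrable[of F lborel G]
    by (simp add: F_def G_def)
  moreover have "(indicator S x * (a * f x + b * g x))\<^sup>2
      = a\<^sup>2 * (F x)\<^sup>2 + 2 * a * b * (F x * G x) + b\<^sup>2 * (G x)\<^sup>2" for x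
    unfolding restrict by (simp add: power2_eq_square algebra_simps)
  ultimately show "integrable lborel (\<lambda>x. (indicator S x * (a * f x + b * g x))\<^sup>2)"
    by (simp only:)
qed

lemma L2_on_scale: "L2_on S f \<Longrightarrow> L2_on S (\<lambda>x. a * f x)"
  using L2_on_lincomb[of S f f a 0] by simp

lemma L2_on_diff: "L2_on S f \<Longrightarrow> L2_on S g \<Longrightarrow> L2_on S (\<lambda>x. f x - g x)"
  using L2_on_lincomb[of S f g 1 "-1"] by simp

lemma L2_on_add: "L2_on S f \<Longrightarrow> L2_on S g \<Longrightarrow> L2_on S (\<lambda>x. f x + g x)"
  using L2_on_lincomb[of S f g 1 1] by simp

lemma L2_on_cong:
  assumes "L2_on S f" "\<And>x. x \<in> S \<Longrightarrow> f x = g x"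
  shows "L2_on S g"
proof -
  have "indicator S x * f x = indicator S x * g x" for x
    using assms(2) by (auto simp: indicator_def)
  then show ?thesis using assms(1) by (simp only: L2_on_iff_indicator)
qed

lemma L2_on_diff_quotient:
  assumes "L2_on S f" "L2_on S g"
  shows "L2_on S (\<lambda>x. (f x - g x) / c)"
  using L2_on_lincomb[OF assms, of "1 / c" "- 1 / c"]
  by (rule L2_on_cong) (simp add: field_simps diff_divide_distrib)

lemma L2_on_subset:
  assumes "L2_on S f" "T \<subseteq> S" "T \<in> sets lborel"
  shows "L2_on T f"
  unfolding L2_on_iff_indicator
proof
  have restrict: "indicator T x * f x = indicator T x * (indicator S x * f x)" for x
    using assms(2) by (auto simp: indicator_def)
  show "(\<lambda>x. indicator T x * f x) \<in> borel_measurable lborel"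
    unfolding restrict using L2_on_D(1)[OF assms(1)] assms(3) by measurable
  have "set_integrable lborel T (\<lambda>x. (f x)\<^sup>2)"
    using assms unfolding L2_on_def by (auto intro: set_integrable_subset)
  then show "integrable lborel (\<lambda>x. (indicator T x * f x)\<^sup>2)"
    unfolding set_integrable_def by (simp add: indicator_mult_square)
qed

lemma L2_on_set_integrable:
  assumes "L2_on S f" "S \<in> sets lborel" "emeasure lborel S < \<infinity>"
  shows "set_integrable lborel S f"
  unfolding set_integrable_def
proof (rule Bochner_Integration.integrable_bound)
  have "integrable lborel (indicator S :: real \<Rightarrow> real)"
    using assms by (intro integrable_real_indicator) auto
  then show "integrable lborel (\<lambda>x. indicator S x + (indicator S x * f x)\<^sup>2 :: real)"
    using L2_on_D(2)[OF assms(1)] by auto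
  show "(\<lambda>x. indicator S x *\<^sub>R f x) \<in> borel_measurable lborel"
    using L2_on_D(1)[OF assms(1)] by simp
  have "\<bar>y\<bar> \<le> 1 + y\<^sup>2" for y :: real
  proof (cases "\<bar>y\<bar> \<le> 1")
    case False
    then have "\<bar>y\<bar> * 1 \<le> \<bar>y\<bar> * \<bar>y\<bar>" by (intro mult_left_mono) auto
    then show ?thesis by (simp add: power2_eq_square)
  qed (use zero_le_power2[of y] in linarith)
  then show "AE x in lborel. norm (indicator S x *\<^sub>R f x) \<le> norm (indicator S x + (indicator S x * f x)\<^sup>2 :: real)"
    by (intro AE_I2) (simp add: indicator_def)
qed

lemma L2_on_const: "L2_on {a..b} (\<lambda>x. c)"
  unfolding L2_on_iff_indicator
proof
  show "(\<lambda>x. indicator {a..b} x * c) \<in> borel_measurable lborel" by measurable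
  have "integrable lborel (\<lambda>x. c\<^sup>2 * indicator {a..b} x :: real)"
    by (intro integrable_mult_right integrable_real_indicator) (auto simp: emeasure_lborel_Icc_eq)
  moreover have "(indicator {a..b} x * c)\<^sup>2 = c\<^sup>2 * indicator {a..b} x" for x
    by (simp add: indicator_def)
  ultimately show "integrable lborel (\<lambda>x. (indicator {a..b} x * c)\<^sup>2)"
    by (simp only:)
qed

lemma set_integral_square_nonneg: "0 \<le> (LINT x:S|lborel. (f x)\<^sup>2)" for f :: "real \<Rightarrow> real"
  unfolding set_lebesgue_integral_def
  by (intro integral_nonneg_AE AE_I2) (simp add: indicator_def)

lemma L2_on_Cauchy_Schwarz:
  assumes "L2_on S f" "L2_on S g"
  shows "\<bar>LINT x:S|lborel. f x * g x\<bar>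
    \<le> sqrt (LINT x:S|lborel. (f x)\<^sup>2) * sqrt (LINT x:S|lborel. (g x)\<^sup>2)"
proof -
  have "(LINT x:S|lborel. f x * g x)\<^sup>2 \<le> (LINT x:S|lborel. (f x)\<^sup>2) * (LINT x:S|lborel. (g x)\<^sup>2)"
    using Cauchy_Schwarz_integral[OF L2_on_D(1)[OF assms(1)] L2_on_D(1)[OF assms(2)]
        L2_on_D(2)[OF assms(1)] L2_on_D(2)[OF assms(2)]]
    unfolding set_lebesgue_integral_def by (simp add: indicator_mult_mult indicator_mult_square)
  then have "sqrt ((LINT x:S|lborel. f x * g x)\<^sup>2)
    \<le> sqrt ((LINT x:S|lborel. (f x)\<^sup>2) * (LINT x:S|lborel. (g x)\<^sup>2))"
    by (rule real_sqrt_le_mono)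
  then show ?thesis by (simp add: real_sqrt_mult)
qed

lemma L2_on_square_add_le:
  assumes "L2_on S f" "L2_on S g"
  shows "(LINT x:S|lborel. (f x + g x)\<^sup>2)
    \<le> 2 * (LINT x:S|lborel. (f x)\<^sup>2) + 2 * (LINT x:S|lborel. (g x)\<^sup>2)"
proof -
  have "(LINT x:S|lborel. (f x + g x)\<^sup>2) \<le> (LINT x:S|lborel. 2 * (f x)\<^sup>2 + 2 * (g x)\<^sup>2)"
  proof (rule set_integral_mono)
    show "set_integrable lborel S (\<lambda>x. (f x + g x)\<^sup>2)"
      using L2_on_add[OF assms] unfolding L2_on_def by simp
    show "set_integrable lborel S (\<lambda>x. 2 * (f x)\<^sup>2 + 2 * (g x)\<^sup>2)"
      using assms unfolding L2_on_def by auto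
    show "(f x + g x)\<^sup>2 \<le> 2 * (f x)\<^sup>2 + 2 * (g x)\<^sup>2" for x
      using zero_le_power2[of "f x - g x"] by (simp add: power2_eq_square algebra_simps)
  qed
  also have "\<dots> = 2 * (LINT x:S|lborel. (f x)\<^sup>2) + 2 * (LINT x:S|lborel. (g x)\<^sup>2)"
    using assms by (simp add: L2_on_def set_integral_add(2))
  finally show ?thesis .
qed

lemma AE_eq_0_if_L2_on_square_integral_eq_0:
  assumes "L2_on S f" "(LINT x:S|lborel. (f x)\<^sup>2) = 0"
  shows "AE x in lborel. x \<in> S \<longrightarrow> f x = 0"
proof -
  have i: "integrable lborel (\<lambda>x. indicator S x *\<^sub>R (f x)\<^sup>2)"
    using assms(1) unfolding L2_on_def set_integrable_def by simp
  have "AE x in lborel. indicator S x *\<^sub>R (f x)\<^sup>2 = 0"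
    using integral_nonneg_eq_0_iff_AE[OF i] assms(2) unfolding set_lebesgue_integral_def
    by (simp add: indicator_def)
  then show ?thesis by eventually_elim (auto simp: indicator_def)
qed

lemma L2_on_inner_diff_le:
  assumes f: "L2_on S f" "L2_on S f0" and g: "L2_on S g" "L2_on S g0"
  shows "\<bar>(LINT x:S|lborel. f x * g x) - (LINT x:S|lborel. f0 x * g0 x)\<bar>
    \<le> sqrt (LINT x:S|lborel. (f x - f0 x)\<^sup>2) * sqrt (LINT x:S|lborel. (g x - g0 x)\<^sup>2)
      + sqrt (LINT x:S|lborel. (f x - f0 x)\<^sup>2) * sqrt (LINT x:S|lborel. (g0 x)\<^sup>2)
      + sqrt (LINT x:S|lborel. (f0 x)\<^sup>2) * sqrt (LINT x:S|lborel. (g x - g0 x)\<^sup>2)"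
proof -
  have df: "L2_on S (\<lambda>x. f x - f0 x)" and dg: "L2_on S (\<lambda>x. g x - g0 x)"
    using f g by (auto intro: L2_on_diff)
  have i1: "set_integrable lborel S (\<lambda>x. (f x - f0 x) * (g x - g0 x))"
    and i2: "set_integrable lborel S (\<lambda>x. (f x - f0 x) * g0 x)"
    and i3: "set_integrable lborel S (\<lambda>x. f0 x * (g x - g0 x))"
    using df dg f g by (auto intro: L2_on_set_integrable_mult)
  have product_split: "f x * g x - f0 x * g0 x
      = ((f x - f0 x) * (g x - g0 x) + (f x - f0 x) * g0 x) + f0 x * (g x - g0 x)" for x
    by (simp add: algebra_simps)
  have "(LINT x:S|lborel. f x * g x) - (LINT x:S|lborel. f0 x * g0 x)
      = (LINT x:S|lborel. f x * g x - f0 x * g0 x)"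
    using f g by (intro set_integral_diff(2)[symmetric] L2_on_set_integrable_mult)
  also have "\<dots> = (LINT x:S|lborel. ((f x - f0 x) * (g x - g0 x) + (f x - f0 x) * g0 x)
      + f0 x * (g x - g0 x))"
    by (simp only: product_split)
  also have "\<dots> = (LINT x:S|lborel. (f x - f0 x) * (g x - g0 x))
      + (LINT x:S|lborel. (f x - f0 x) * g0 x) + (LINT x:S|lborel. f0 x * (g x - g0 x))"
    by (subst set_integral_add(2)[OF set_integral_add(1)[OF i1 i2] i3],
        subst set_integral_add(2)[OF i1 i2]) (rule refl)
  finally have split: "(LINT x:S|lborel. f x * g x) - (LINT x:S|lborel. f0 x * g0 x)
      = (LINT x:S|lborel. (f x - f0 x) * (g x - g0 x))
      + (LINT x:S|lborel. (f x - f0 x) * g0 x) + (LINT x:S|lborel. f0 x * (g x - g0 x))" .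
  have "\<bar>(LINT x:S|lborel. (f x - f0 x) * (g x - g0 x))
      + (LINT x:S|lborel. (f x - f0 x) * g0 x) + (LINT x:S|lborel. f0 x * (g x - g0 x))\<bar>
      \<le> \<bar>LINT x:S|lborel. (f x - f0 x) * (g x - g0 x)\<bar>
      + \<bar>LINT x:S|lborel. (f x - f0 x) * g0 x\<bar> + \<bar>LINT x:S|lborel. f0 x * (g x - g0 x)\<bar>"
    by (rule order_trans[OF abs_triangle_ineq add_right_mono[OF abs_triangle_ineq]])
  also have "\<dots> \<le> sqrt (LINT x:S|lborel. (f x - f0 x)\<^sup>2) * sqrt (LINT x:S|lborel. (g x - g0 x)\<^sup>2)
      + sqrt (LINT x:S|lborel. (f x - f0 x)\<^sup>2) * sqrt (LINT x:S|lborel. (g0 x)\<^sup>2)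
      + sqrt (LINT x:S|lborel. (f0 x)\<^sup>2) * sqrt (LINT x:S|lborel. (g x - g0 x)\<^sup>2)"
    by (intro add_mono) (rule L2_on_Cauchy_Schwarz; fact)+
  finally show ?thesis by (simp only: split)
qed

lemma L2_on_inner_tendsto:
  fixes A B :: "'a \<Rightarrow> real \<Rightarrow> real"
  assumes ev: "eventually (\<lambda>s. L2_on S (A s) \<and> L2_on S (B s)) F"
    and A0: "L2_on S A0" and B0: "L2_on S B0"
    and lim_A: "((\<lambda>s. LINT x:S|lborel. (A s x - A0 x)\<^sup>2) \<longlongrightarrow> 0) F"
    and lim_B: "((\<lambda>s. LINT x:S|lborel. (B s x - B0 x)\<^sup>2) \<longlongrightarrow> 0) F"
  shows "((\<lambda>s. LINT x:S|lborel. A s x * B s x) \<longlongrightarrow> (LINT x:S|lborel. A0 x * B0 x)) F"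
proof -
  define a where "a s = sqrt (LINT x:S|lborel. (A s x - A0 x)\<^sup>2)" for s
  define b where "b s = sqrt (LINT x:S|lborel. (B s x - B0 x)\<^sup>2)" for s
  define nA where "nA = sqrt (LINT x:S|lborel. (A0 x)\<^sup>2)"
  define nB where "nB = sqrt (LINT x:S|lborel. (B0 x)\<^sup>2)"
  have "(a \<longlongrightarrow> 0) F" unfolding a_def using tendsto_real_sqrt[OF lim_A] by simp
  moreover have "(b \<longlongrightarrow> 0) F" unfolding b_def using tendsto_real_sqrt[OF lim_B] by simp
  ultimately have "((\<lambda>s. a s * b s + a s * nB + nA * b s) \<longlongrightarrow> 0 * 0 + 0 * nB + nA * 0) F"
    by (intro tendsto_intros)
  then have bound_lim: "((\<lambda>s. a s * b s + a s * nB + nA * b s) \<longlongrightarrow> 0) F" by simp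
  have "eventually (\<lambda>s. norm ((LINT x:S|lborel. A s x * B s x) - (LINT x:S|lborel. A0 x * B0 x))
      \<le> a s * b s + a s * nB + nA * b s) F"
    using ev
  proof eventually_elim
    case (elim s)
    then show ?case
      using L2_on_inner_diff_le[of S "A s" A0 "B s" B0] A0 B0
      unfolding a_def b_def nA_def nB_def real_norm_def by blast
  qed
  then have "((\<lambda>s. (LINT x:S|lborel. A s x * B s x) - (LINT x:S|lborel. A0 x * B0 x)) \<longlongrightarrow> 0) F"
    by (rule Lim_null_comparison) (rule bound_lim)
  then show ?thesis by (simp add: Lim_null[symmetric])
qed

lemma L2_on_inner_diff_quotient:
  assumes f: "L2_on S f" "L2_on S f0" and g: "L2_on S g" "L2_on S g0"
  shows "((LINT x:S|lborel. f x * g x) - (LINT x:S|lborel. f0 x * g0 x)) / d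
    = (LINT x:S|lborel. ((f x - f0 x) / d) * g x) + (LINT x:S|lborel. f0 x * ((g x - g0 x) / d))"
proof -
  have i_f: "set_integrable lborel S (\<lambda>x. (f x - f0 x) * g x)"
    and i_g: "set_integrable lborel S (\<lambda>x. f0 x * (g x - g0 x))"
    using f g by (auto intro: L2_on_set_integrable_mult L2_on_diff)
  have split: "f x * g x - f0 x * g0 x = (f x - f0 x) * g x + f0 x * (g x - g0 x)" for x
    by (simp add: algebra_simps)
  have "(LINT x:S|lborel. f x * g x) - (LINT x:S|lborel. f0 x * g0 x)
      = (LINT x:S|lborel. f x * g x - f0 x * g0 x)"
    using f g by (intro set_integral_diff(2)[symmetric] L2_on_set_integrable_mult)
  also have "\<dots> = (LINT x:S|lborel. (f x - f0 x) * g x + f0 x * (g x - g0 x))"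
    by (simp only: split)
  also have "\<dots> = (LINT x:S|lborel. (f x - f0 x) * g x) + (LINT x:S|lborel. f0 x * (g x - g0 x))"
    by (rule set_integral_add(2)[OF i_f i_g])
  finally have "((LINT x:S|lborel. f x * g x) - (LINT x:S|lborel. f0 x * g0 x)) / d
      = (LINT x:S|lborel. (f x - f0 x) * g x) / d + (LINT x:S|lborel. f0 x * (g x - g0 x)) / d"
    by (simp add: add_divide_distrib)
  also have "\<dots> = (LINT x:S|lborel. (f x - f0 x) * g x / d) + (LINT x:S|lborel. f0 x * (g x - g0 x) / d)"
    by (simp only: set_integral_divide_zero)
  finally show ?thesis by simp
qed

lemma L2_on_inner_has_field_derivative:
  fixes u w :: "real \<Rightarrow> real \<Rightarrow> real"
  assumes ev: "eventually (\<lambda>s. L2_on S (u s) \<and> L2_on S (w s)) (at r)"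
    and L2: "L2_on S (u r)" "L2_on S (w r)" "L2_on S u'" "L2_on S w'"
    and du: "((\<lambda>s. LINT x:S|lborel. ((u s x - u r x) / (s - r) - u' x)\<^sup>2) \<longlongrightarrow> 0) (at r)"
    and dw: "((\<lambda>s. LINT x:S|lborel. ((w s x - w r x) / (s - r) - w' x)\<^sup>2) \<longlongrightarrow> 0) (at r)"
    and cw: "((\<lambda>s. LINT x:S|lborel. (w s x - w r x)\<^sup>2) \<longlongrightarrow> 0) (at r)"
  shows "((\<lambda>s. LINT x:S|lborel. u s x * w s x) has_field_derivative
      (LINT x:S|lborel. u' x * w r x) + (LINT x:S|lborel. u r x * w' x)) (at r)"
proof -
  define p where "p s = (LINT x:S|lborel. u s x * w s x)" for s
  have "((\<lambda>s. (LINT x:S|lborel. ((u s x - u r x) / (s - r)) * w s x)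
      + (LINT x:S|lborel. u r x * ((w s x - w r x) / (s - r))))
      \<longlongrightarrow> (LINT x:S|lborel. u' x * w r x) + (LINT x:S|lborel. u r x * w' x)) (at r)"
  proof (intro tendsto_add L2_on_inner_tendsto)
    show "eventually (\<lambda>s. L2_on S (\<lambda>x. (u s x - u r x) / (s - r)) \<and> L2_on S (w s)) (at r)"
      using ev by eventually_elim (use L2 in \<open>auto intro: L2_on_diff_quotient\<close>)
    show "eventually (\<lambda>s. L2_on S (u r) \<and> L2_on S (\<lambda>x. (w s x - w r x) / (s - r))) (at r)"
      using ev by eventually_elim (use L2 in \<open>auto intro: L2_on_diff_quotient\<close>)
  qed (use L2 du dw cw in simp_all)
  moreover have "eventually (\<lambda>s. (LINT x:S|lborel. ((u s x - u r x) / (s - r)) * w s x)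
      + (LINT x:S|lborel. u r x * ((w s x - w r x) / (s - r))) = (p s - p r) / (s - r)) (at r)"
    using ev by eventually_elim (use L2 in \<open>simp add: p_def L2_on_inner_diff_quotient\<close>)
  ultimately have "((\<lambda>s. (p s - p r) / (s - r)) \<longlongrightarrow>
      (LINT x:S|lborel. u' x * w r x) + (LINT x:S|lborel. u r x * w' x)) (at r)"
    by (rule Lim_transform_eventually)
  then show ?thesis unfolding p_def by (simp add: has_field_derivative_iff)
qed

lemma square_integral_eq_0_if_L2_limit_of_null:
  assumes "L2_on S f" "\<And>n. L2_on S (g n)" "\<And>n. (LINT x:S|lborel. (g n x)\<^sup>2) = 0"
    and lim: "(\<lambda>n. LINT x:S|lborel. (g n x - f x)\<^sup>2) \<longlonglongrightarrow> 0"
  shows "(LINT x:S|lborel. (f x)\<^sup>2) = 0"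
proof -
  have "(LINT x:S|lborel. (f x)\<^sup>2) \<le> 2 * (LINT x:S|lborel. (g n x - f x)\<^sup>2)" for n
  proof -
    have "(LINT x:S|lborel. ((f x - g n x) + g n x)\<^sup>2)
        \<le> 2 * (LINT x:S|lborel. (f x - g n x)\<^sup>2) + 2 * (LINT x:S|lborel. (g n x)\<^sup>2)"
      using assms(1,2) by (intro L2_on_square_add_le L2_on_diff)
    then show ?thesis using assms(3)[of n] by (simp add: power2_commute)
  qed
  then have "(LINT x:S|lborel. (f x)\<^sup>2) \<le> 2 * 0"
    by (intro tendsto_le[OF trivial_limit_sequentially tendsto_mult[OF tendsto_const lim] tendsto_const])
       simp
  then show ?thesis using set_integral_square_nonneg[of S f] by simp
qed

lemma set_integral_cong_AE_subset:
  assumes "L2_on S f" "L2_on S g" "A \<subseteq> S" "A \<in> sets lborel"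
    and "AE x in lborel. x \<in> S \<longrightarrow> f x = g x"
  shows "(LINT x:A|lborel. f x) = (LINT x:A|lborel. g x)"
  unfolding set_lebesgue_integral_def
proof (rule integral_cong_AE)
  show "(\<lambda>x. indicator A x *\<^sub>R f x) \<in> borel_measurable lborel"
    using L2_on_D(1)[OF L2_on_subset[OF assms(1,3,4)]] by simp
  show "(\<lambda>x. indicator A x *\<^sub>R g x) \<in> borel_measurable lborel"
    using L2_on_D(1)[OF L2_on_subset[OF assms(2,3,4)]] by simp
  show "AE x in lborel. indicator A x *\<^sub>R f x = indicator A x *\<^sub>R g x"
    using assms(5) by eventually_elim (use assms(3) in \<open>auto simp: indicator_def\<close>)
qed

lemma L2_diff_quotient_reflect:
  fixes u :: "real \<Rightarrow> real \<Rightarrow> real"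
  assumes "((\<lambda>s. LINT x:S|lborel. ((u s x - u (c - r) x) / (s - (c - r)) - v x)\<^sup>2) \<longlongrightarrow> 0) (at (c - r))"
  shows "((\<lambda>s. LINT x:S|lborel. ((u (c - s) x - u (c - r) x) / (s - r) - - v x)\<^sup>2) \<longlongrightarrow> 0) (at r)"
proof -
  have eq: "((u (c - s) x - u (c - r) x) / (s - r) - - v x)\<^sup>2
      = ((u (c - s) x - u (c - r) x) / ((c - s) - (c - r)) - v x)\<^sup>2" for s x
  proof -
    have "(u (c - s) x - u (c - r) x) / ((c - s) - (c - r)) = - ((u (c - s) x - u (c - r) x) / (s - r))"
      by (simp add: divide_minus_right[symmetric])
    then show ?thesis by (simp add: power2_eq_square algebra_simps)
  qed
  have "filterlim (\<lambda>s. c - s) (at (c - r)) (at r)"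
    using filterlim_diff_left_at_within[of UNIV c UNIV r] by simp
  then show ?thesis unfolding eq by (rule filterlim_compose[OF assms])
qed

section \<open>The domain of the generator\<close>

text \<open>For f in D(A) with (x f')' = h, we call x f'(x) the flux of f.\<close>

lemma domA_D:
  assumes "domA l f h"
  shows "L2_on {0<..<l} f" "L2_on {0<..<l} h"
    "\<And>x. 0 < x \<Longrightarrow> x < l \<Longrightarrow> f differentiable (at x)"
    "continuous (at_left l) f" "f l = 0"
    "set_integrable lborel {0<..<l} (\<lambda>x. x * (deriv f x)\<^sup>2)"
    "L2_on {0<..<l} (\<lambda>x. x * deriv f x)"
    "\<And>x y. 0 < x \<Longrightarrow> x \<le> y \<Longrightarrow> y < l \<Longrightarrow>
        y * deriv f y - x * deriv f x = (LINT s:{x..y}|lborel. h s)"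
  using assms unfolding domA_def L2_iff_L2_on by auto

lemma domA_tendsto_0_at_left:
  assumes "domA l f h"
  shows "(f \<longlongrightarrow> 0) (at_left l)"
  using domA_D(4,5)[OF assms] by (simp add: continuous_within)

lemma domA_has_real_derivative:
  assumes "domA l f h" "0 < x" "x < l"
  shows "(f has_real_derivative deriv f x) (at x)"
  using domA_D(3)[OF assms] by (simp add: DERIV_deriv_iff_real_differentiable)

lemma domA_deriv_borel_measurable:
  assumes "domA l f h" "0 < a" "b < l"
  shows "(\<lambda>x. indicator {a..b} x * deriv f x) \<in> borel_measurable lborel"
proof -
  have eq: "indicator {a..b} x * deriv f x
      = indicator {a..b} x * (1 / x) * (indicator {0<..<l} x * (x * deriv f x))" for x
    using assms by (auto simp: indicator_def)
  show ?thesis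
    unfolding eq using L2_on_D(1)[OF domA_D(7)[OF assms(1)]] by measurable
qed

lemma domA_set_integrable_deriv:
  assumes "domA l f h" "0 < a" "b < l"
  shows "set_integrable lborel {a..b} (\<lambda>x. (x * (deriv f x)\<^sup>2 + 1 / x) / 2)"
    and "set_integrable lborel {a..b} (deriv f)"
    and "set_integrable lborel {a..b} (\<lambda>x. \<bar>deriv f x\<bar>)"
proof -
  have "set_integrable lborel {a..b} (\<lambda>x. x * (deriv f x)\<^sup>2)"
    by (rule set_integrable_subset[OF domA_D(6)[OF assms(1)]]) (use assms in auto)
  then show bound: "set_integrable lborel {a..b} (\<lambda>x. (x * (deriv f x)\<^sup>2 + 1 / x) / 2)"
    using set_integrable_inverse_Icc[OF assms(2)] by (intro set_integrable_divide set_integral_add)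
  show "set_integrable lborel {a..b} (deriv f)"
    unfolding set_integrable_def
  proof (rule Bochner_Integration.integrable_bound)
    show "integrable lborel (\<lambda>x. indicator {a..b} x *\<^sub>R ((x * (deriv f x)\<^sup>2 + 1 / x) / 2))"
      using bound unfolding set_integrable_def .
    show "(\<lambda>x. indicator {a..b} x *\<^sub>R deriv f x) \<in> borel_measurable lborel"
      using domA_deriv_borel_measurable[OF assms] by simp
    have "\<bar>indicator {a..b} x * deriv f x\<bar>
        \<le> \<bar>indicator {a..b} x * ((x * (deriv f x)\<^sup>2 + 1 / x) / 2)\<bar>" for x
      using assms(2) abs_le_AM_GM_inverse[of x "deriv f x"] by (auto simp: indicator_def)
    then show "AE x in lborel. norm (indicator {a..b} x *\<^sub>R deriv f x)
        \<le> norm (indicator {a..b} x *\<^sub>R ((x * (deriv f x)\<^sup>2 + 1 / x) / 2))"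
      by (intro AE_I2) simp
  qed
  then show "set_integrable lborel {a..b} (\<lambda>x. \<bar>deriv f x\<bar>)"
    by (rule set_integrable_abs)
qed

lemma domA_set_integral_deriv:
  assumes "domA l f h" "0 < a" "a \<le> b" "b < l"
  shows "(LINT x:{a..b}|lborel. deriv f x) = f b - f a"
proof -
  have "(deriv f has_integral f b - f a) {a..b}"
  proof (rule fundamental_theorem_of_calculus[OF assms(3)])
    fix x assume "x \<in> {a..b}"
    then have "(f has_real_derivative deriv f x) (at x)"
      using domA_has_real_derivative[OF assms(1)] assms by auto
    then show "(f has_vector_derivative deriv f x) (at x within {a..b})"
      by (simp add: has_real_derivative_iff_has_vector_derivative has_vector_derivative_at_within)
  qed
  then show ?thesis
    using set_borel_integral_eq_integral(2)[OF domA_set_integrable_deriv(2)[OF assms(1,2,4)]]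
    by (simp add: integral_unique)
qed

lemma domA_flux_diff_le:
  assumes "domA l f h" "0 < x'" "x' \<le> x" "x < l"
  shows "\<bar>x * deriv f x - x' * deriv f x'\<bar> \<le> sqrt (LINT s:{0<..<l}|lborel. (h s)\<^sup>2) * sqrt x"
proof -
  define S where "S = (LINT s:{0<..<l}|lborel. (h s)\<^sup>2)"
  have sub: "{x'..x} \<subseteq> {0<..<l}" using assms by auto
  have "\<bar>LINT s:{x'..x}|lborel. h s * 1\<bar>
      \<le> sqrt (LINT s:{x'..x}|lborel. (h s)\<^sup>2) * sqrt (LINT s:{x'..x}|lborel. 1\<^sup>2)"
    by (rule L2_on_Cauchy_Schwarz[OF L2_on_subset[OF domA_D(2)[OF assms(1)] sub] L2_on_const]) simp
  also have "(LINT s:{x'..x}|lborel. (1::real)\<^sup>2) = x - x'"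
    using assms(3) by (subst set_integral_const) (auto simp: emeasure_lborel_Icc_eq)
  also have "(LINT s:{x'..x}|lborel. (h s)\<^sup>2) \<le> S"
    unfolding S_def by (rule set_integral_mono_subset)
      (use domA_D(2)[OF assms(1)] sub in \<open>auto simp: L2_on_def\<close>)
  then have "sqrt (LINT s:{x'..x}|lborel. (h s)\<^sup>2) * sqrt (x - x') \<le> sqrt S * sqrt x"
    using assms set_integral_square_nonneg[of "{0<..<l}" h]
    by (intro mult_mono real_sqrt_le_mono) (auto simp: S_def)
  finally show ?thesis
    using domA_D(8)[OF assms] by (simp add: S_def)
qed

lemma domA_flux_small_near_0:
  assumes "domA l f h" "0 < x" "x < l" "0 < e"
  obtains x' where "0 < x'" "x' \<le> x" "\<bar>x' * deriv f x'\<bar> < e"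
proof -
  have "\<exists>x'. 0 < x' \<and> x' \<le> x \<and> \<bar>x' * deriv f x'\<bar> < e"
  proof (rule ccontr)
    assume "\<nexists>x'. 0 < x' \<and> x' \<le> x \<and> \<bar>x' * deriv f x'\<bar> < e"
    then have ge: "e \<le> \<bar>s * deriv f s\<bar>" if "0 < s" "s \<le> x" for s
      using that by force
    have "e\<^sup>2 \<le> 0"
    proof (rule inverse_le_set_integrable_imp_nonpos[where F = "\<lambda>s. s * (deriv f s)\<^sup>2"])
      show "set_integrable lborel {0<..<x} (\<lambda>s. s * (deriv f s)\<^sup>2)"
        by (rule set_integrable_subset[OF domA_D(6)[OF assms(1)]]) (use assms in auto)
      fix s assume s: "0 < s" "s < x"
      have "e\<^sup>2 \<le> (s * deriv f s)\<^sup>2"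
        using ge[of s] s assms(4) by (simp add: abs_le_square_iff[symmetric])
      then show "e\<^sup>2 / s \<le> s * (deriv f s)\<^sup>2"
        using s by (simp add: divide_le_eq power2_eq_square algebra_simps)
    qed (use assms in auto)
    then show False using assms(4) by simp
  qed
  then show thesis using that by blast
qed

text \<open>The flux takes arbitrarily small values near 0, so the bound on its increments also
  bounds the flux itself.\<close>

lemma domA_flux_le_sqrt:
  assumes "domA l f h"
  obtains K where "\<And>x. 0 < x \<Longrightarrow> x < l \<Longrightarrow> \<bar>x * deriv f x\<bar> \<le> K * sqrt x"
proof
  fix x assume x: "0 < x" "x < l"
  show "\<bar>x * deriv f x\<bar> \<le> sqrt (LINT s:{0<..<l}|lborel. (h s)\<^sup>2) * sqrt x"
  proof (rule field_le_epsilon)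
    fix e :: real assume "0 < e"
    then obtain x' where x': "0 < x'" "x' \<le> x" "\<bar>x' * deriv f x'\<bar> < e"
      using domA_flux_small_near_0[OF assms x] by blast
    then show "\<bar>x * deriv f x\<bar> \<le> sqrt (LINT s:{0<..<l}|lborel. (h s)\<^sup>2) * sqrt x + e"
      using domA_flux_diff_le[OF assms x'(1,2) x(2)] by linarith
  qed
qed

lemma domA_log_bound:
  assumes "domA l f h" "0 < x" "x \<le> l/2"
  shows "\<bar>f x\<bar> \<le> \<bar>f (l/2)\<bar> + ((LINT s:{0<..<l}|lborel. s * (deriv f s)\<^sup>2) + (ln (l/2) - ln x)) / 2"
proof -
  have "l/2 < l" using assms by simp
  have "\<bar>f (l/2) - f x\<bar> \<le> (LINT s:{x..l/2}|lborel. \<bar>deriv f s\<bar>)"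
    using domA_set_integral_deriv[OF assms \<open>l/2 < l\<close>]
      set_integral_norm_bound[OF domA_set_integrable_deriv(2)[OF assms(1,2) \<open>l/2 < l\<close>]]
    by simp
  also have "\<dots> \<le> (LINT s:{x..l/2}|lborel. (s * (deriv f s)\<^sup>2 + 1 / s) / 2)"
    by (rule set_integral_mono[OF domA_set_integrable_deriv(3,1)[OF assms(1,2) \<open>l/2 < l\<close>]])
       (use assms abs_le_AM_GM_inverse in auto)
  also have "\<dots> = ((LINT s:{x..l/2}|lborel. s * (deriv f s)\<^sup>2) + (LINT s:{x..l/2}|lborel. 1 / s)) / 2"
    using set_integrable_subset[OF domA_D(6)[OF assms(1)], of "{x..l/2}"]
      set_integrable_inverse_Icc[OF assms(2)] assms
    by (simp add: set_integral_add(2) subset_iff)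
  also have "(LINT s:{x..l/2}|lborel. 1 / s) = ln (l/2) - ln x"
    using set_integral_inverse_Icc assms by simp
  finally have A: "\<bar>f (l/2) - f x\<bar>
      \<le> ((LINT s:{x..l/2}|lborel. s * (deriv f s)\<^sup>2) + (ln (l/2) - ln x)) / 2" .
  have B: "(LINT s:{x..l/2}|lborel. s * (deriv f s)\<^sup>2) \<le> (LINT s:{0<..<l}|lborel. s * (deriv f s)\<^sup>2)"
    by (rule set_integral_mono_subset[OF domA_D(6)[OF assms(1)]]) (use assms in auto)
  have "\<bar>f x\<bar> \<le> \<bar>f (l/2)\<bar> + \<bar>f (l/2) - f x\<bar>" by arith
  also have "\<dots> \<le> \<bar>f (l/2)\<bar> + ((LINT s:{x..l/2}|lborel. s * (deriv f s)\<^sup>2) + (ln (l/2) - ln x)) / 2"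
    using A by simp
  also have "\<dots> \<le> \<bar>f (l/2)\<bar> + ((LINT s:{0<..<l}|lborel. s * (deriv f s)\<^sup>2) + (ln (l/2) - ln x)) / 2"
    using B by simp
  finally show ?thesis .
qed

lemma domA_flux_bounded_near_right:
  assumes "domA l f h" "0 < l"
  obtains K where "\<And>y. l/2 \<le> y \<Longrightarrow> y < l \<Longrightarrow> \<bar>y * deriv f y\<bar> \<le> K"
proof
  have ih: "set_integrable lborel {0<..<l} (\<lambda>x. \<bar>h x\<bar>)"
    by (intro set_integrable_abs L2_on_set_integrable[OF domA_D(2)[OF assms(1)]]) (use assms in auto)
  fix y assume y: "l/2 \<le> y" "y < l"
  have "\<bar>y * deriv f y - (l/2) * deriv f (l/2)\<bar> = \<bar>LINT s:{l/2..y}|lborel. h s\<bar>"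
    using domA_D(8)[OF assms(1), of "l/2" y] y assms by simp
  also have "\<dots> \<le> (LINT s:{l/2..y}|lborel. \<bar>h s\<bar>)"
  proof -
    have "set_integrable lborel {l/2..y} h"
      by (rule set_integrable_subset[OF L2_on_set_integrable[OF domA_D(2)[OF assms(1)]]])
         (use assms y in auto)
    from set_integral_norm_bound[OF this] show ?thesis by simp
  qed
  also have "\<dots> \<le> (LINT x:{0<..<l}|lborel. \<bar>h x\<bar>)"
    by (rule set_integral_mono_subset[OF ih]) (use assms y in auto)
  finally show "\<bar>y * deriv f y\<bar> \<le> \<bar>(l/2) * deriv f (l/2)\<bar> + (LINT x:{0<..<l}|lborel. \<bar>h x\<bar>)"
    by linarith
qed

lemma domA_flux_const_if_generator_scaled:
  assumes f: "domA l f h" and g: "domA l g k"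
    and same_deriv: "\<forall>x\<in>{0<..<l}. deriv f x = deriv g x"
    and scaled: "AE x in lborel. x \<in> {0<..<l} \<longrightarrow> k x = \<mu> * h x" and "\<mu> \<noteq> 1"
    and xy: "0 < x" "x \<le> y" "y < l"
  shows "y * deriv f y = x * deriv f x"
proof -
  have "y * deriv f y - x * deriv f x = (LINT s:{x..y}|lborel. k s)"
    using domA_D(8)[OF g xy] same_deriv xy by simp
  also have "\<dots> = (LINT s:{x..y}|lborel. \<mu> * h s)"
    by (rule set_integral_cong_AE_subset[OF domA_D(2)[OF g] L2_on_scale[OF domA_D(2)[OF f]] _ _ scaled])
       (use xy in auto)
  also have "\<dots> = \<mu> * (y * deriv f y - x * deriv f x)"
    using domA_D(8)[OF f xy] by simp
  finally have "(y * deriv f y - x * deriv f x) * (1 - \<mu>) = 0" by (simp add: algebra_simps)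
  then show ?thesis using \<open>\<mu> \<noteq> 1\<close> by simp
qed

text \<open>A constant flux C gives x f'^2 = C^2 / x, which is integrable at 0 only if C = 0; then f is
  constant and the boundary condition at l forces f = 0.\<close>

lemma domA_eq_0_if_flux_const:
  assumes f: "domA l f h" and "0 < l"
    and const: "\<And>x y. 0 < x \<Longrightarrow> x \<le> y \<Longrightarrow> y < l \<Longrightarrow> y * deriv f y = x * deriv f x"
  shows "\<forall>x\<in>{0<..<l}. f x = 0"
proof -
  define C where "C = (l/2) * deriv f (l/2)"
  have flux: "x * deriv f x = C" if "0 < x" "x < l" for x
    using const[of x "l/2"] const[of "l/2" x] that by (cases "x \<le> l/2") (auto simp: C_def)
  have "C\<^sup>2 \<le> 0"
  proof (rule inverse_le_set_integrable_imp_nonpos[OF \<open>0 < l\<close> domA_D(6)[OF f]])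
    fix x assume "0 < x" "x < l"
    then show "C\<^sup>2 / x \<le> x * (deriv f x)\<^sup>2"
      using flux[of x] by (auto simp: power2_eq_square field_simps)
  qed
  then have deriv_0: "deriv f x = 0" if "0 < x" "x < l" for x
    using flux[OF that] that by simp
  have "\<exists>K. \<forall>x\<in>{0<..<l}. f x = K"
  proof (rule has_field_derivative_zero_constant)
    fix x assume "x \<in> {0<..<l}"
    then show "(f has_field_derivative 0) (at x within {0<..<l})"
      using domA_has_real_derivative[OF f] deriv_0 by (auto intro: has_field_derivative_at_within)
  qed simp
  then obtain K where K: "\<And>x. x \<in> {0<..<l} \<Longrightarrow> f x = K" by blast
  have "eventually (\<lambda>x. K = f x) (at_left l)"
    unfolding eventually_at_left_field using \<open>0 < l\<close> K by (intro exI[of _ 0]) auto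
  then have "(f \<longlongrightarrow> K) (at_left l)"
    by (rule Lim_transform_eventually[OF tendsto_const])
  then have "K = 0"
    using tendsto_unique[OF _ _ domA_tendsto_0_at_left[OF f]] \<open>0 < l\<close> by simp
  then show ?thesis using K by simp
qed

section \<open>Symmetry of the generator\<close>

lemma domA_set_integrable_weighted_deriv_mult:
  assumes "domA l f hf" "domA l g hg" "0 < x" "y < l"
  shows "set_integrable lborel {x..y} (\<lambda>s. s * deriv f s * deriv g s)"
  unfolding set_integrable_def
proof (rule Bochner_Integration.integrable_bound)
  have "set_integrable lborel {x..y} (\<lambda>s. (s * (deriv f s)\<^sup>2 + s * (deriv g s)\<^sup>2) / 2)"
    using set_integrable_subset[OF domA_D(6)[OF assms(1)], of "{x..y}"]
      set_integrable_subset[OF domA_D(6)[OF assms(2)], of "{x..y}"] assms(3,4)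
    by (intro set_integrable_divide set_integral_add) (auto simp: subset_iff)
  then show "integrable lborel
      (\<lambda>s. indicator {x..y} s *\<^sub>R ((s * (deriv f s)\<^sup>2 + s * (deriv g s)\<^sup>2) / 2))"
    unfolding set_integrable_def .
  have eq: "indicator {x..y} s *\<^sub>R (s * deriv f s * deriv g s)
      = s * (indicator {x..y} s * deriv f s) * (indicator {x..y} s * deriv g s)" for s
    by (simp add: indicator_def)
  show "(\<lambda>s. indicator {x..y} s *\<^sub>R (s * deriv f s * deriv g s)) \<in> borel_measurable lborel"
    unfolding eq
    using domA_deriv_borel_measurable[OF assms(1,3,4)] domA_deriv_borel_measurable[OF assms(2,3,4)]
    by measurable
  have "\<bar>s * deriv f s * deriv g s\<bar> \<le> (s * (deriv f s)\<^sup>2 + s * (deriv g s)\<^sup>2) / 2" if "0 < s" for s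
  proof -
    have "2 * (\<bar>deriv f s\<bar> * \<bar>deriv g s\<bar>) \<le> (deriv f s)\<^sup>2 + (deriv g s)\<^sup>2"
      using zero_le_power2[of "\<bar>deriv f s\<bar> - \<bar>deriv g s\<bar>"] by (simp add: power2_eq_square algebra_simps)
    then have "s * (2 * (\<bar>deriv f s\<bar> * \<bar>deriv g s\<bar>)) \<le> s * ((deriv f s)\<^sup>2 + (deriv g s)\<^sup>2)"
      using that by (intro mult_left_mono) auto
    then show ?thesis using that by (simp add: abs_mult algebra_simps)
  qed
  then show "AE s in lborel. norm (indicator {x..y} s *\<^sub>R (s * deriv f s * deriv g s))
      \<le> norm (indicator {x..y} s *\<^sub>R ((s * (deriv f s)\<^sup>2 + s * (deriv g s)\<^sup>2) / 2))"
    using assms(3) by (intro AE_I2) (auto simp: indicator_def)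
qed

text \<open>Both sides equal the double integral of hf(s) g'(r) over x \<le> s \<le> r \<le> y: integrate
  g' first to get g(y) - g(s), or hf first to get r f'(r) - x f'(x).\<close>

lemma domA_integration_by_parts:
  assumes A: "domA l f hf" "domA l g hg" and xy: "0 < x" "x \<le> y" "y < l"
  shows "(LINT s:{x..y}|lborel. hf s * g s)
       = y * deriv f y * g y - x * deriv f x * g x - (LINT s:{x..y}|lborel. s * deriv f s * deriv g s)"
proof -
  have sub: "{x..y} \<subseteq> {0<..<l}" using xy by auto
  have ihf: "set_integrable lborel {x..y} hf"
    by (rule set_integrable_subset[OF L2_on_set_integrable[OF domA_D(2)[OF A(1)]]]) (use sub xy in auto)
  have idg: "set_integrable lborel {x..y} (deriv g)"
    by (rule domA_set_integrable_deriv(2)[OF A(2) xy(1,3)])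
  have ihg: "set_integrable lborel {x..y} (\<lambda>s. hf s * g s)"
    by (rule set_integrable_subset[OF L2_on_set_integrable_mult[OF domA_D(2)[OF A(1)] domA_D(1)[OF A(2)]]])
       (use sub in auto)
  have iwd: "set_integrable lborel {x..y} (\<lambda>s. s * deriv f s * deriv g s)"
    by (rule domA_set_integrable_weighted_deriv_mult[OF A xy(1,3)])
  have ftc_g: "g y - g s = (LINT r:{s..y}|lborel. deriv g r)" if "s \<in> {x..y}" for s
    using domA_set_integral_deriv[OF A(2), of s y] that xy by simp
  have flux: "r * deriv f r - x * deriv f x = (LINT s:{x..r}|lborel. hf s)" if "r \<in> {x..y}" for r
    using domA_D(8)[OF A(1), of x r] that xy by simp
  have "(LINT s:{x..y}|lborel. hf s * (LINT r:{s..y}|lborel. deriv g r))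
      = (LINT r:{x..y}|lborel. deriv g r * (LINT s:{x..r}|lborel. hf s))"
    using integral_triangle_swap[of x y hf "deriv g"] ihf idg
    by (simp add: set_lebesgue_integral_def set_integrable_def)
  moreover have "(LINT s:{x..y}|lborel. hf s * (LINT r:{s..y}|lborel. deriv g r))
      = g y * (LINT s:{x..y}|lborel. hf s) - (LINT s:{x..y}|lborel. hf s * g s)"
  proof -
    have "(LINT s:{x..y}|lborel. hf s * (LINT r:{s..y}|lborel. deriv g r))
        = (LINT s:{x..y}|lborel. g y * hf s - hf s * g s)"
      by (rule set_lebesgue_integral_cong) (auto simp: ftc_g[symmetric] algebra_simps)
    then show ?thesis using ihf ihg by (simp add: set_integral_diff(2) set_integrable_mult_right)
  qed
  moreover have "(LINT r:{x..y}|lborel. deriv g r * (LINT s:{x..r}|lborel. hf s))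
      = (LINT r:{x..y}|lborel. r * deriv f r * deriv g r) - (x * deriv f x) * (g y - g x)"
  proof -
    have "(LINT r:{x..y}|lborel. deriv g r * (LINT s:{x..r}|lborel. hf s))
        = (LINT r:{x..y}|lborel. r * deriv f r * deriv g r - (x * deriv f x) * deriv g r)"
      by (rule set_lebesgue_integral_cong) (auto simp: flux[symmetric] algebra_simps)
    then show ?thesis
      using iwd idg domA_set_integral_deriv[OF A(2) xy]
      by (simp add: set_integral_diff(2) set_integrable_mult_right)
  qed
  moreover have "(LINT s:{x..y}|lborel. hf s) = y * deriv f y - x * deriv f x"
    using flux[of y] xy by simp
  ultimately show ?thesis by (simp add: algebra_simps)
qed

lemma domA_Green_Icc:
  assumes A: "domA l f hf" "domA l g hg" and xy: "0 < x" "x \<le> y" "y < l"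
  shows "(LINT s:{x..y}|lborel. hf s * g s - f s * hg s)
       = (y * deriv f y * g y - f y * (y * deriv g y)) - (x * deriv f x * g x - f x * (x * deriv g x))"
proof -
  have sub: "{x..y} \<subseteq> {0<..<l}" using xy by auto
  have "set_integrable lborel {x..y} (\<lambda>s. hf s * g s)"
    by (rule set_integrable_subset[OF L2_on_set_integrable_mult[OF domA_D(2)[OF A(1)] domA_D(1)[OF A(2)]]])
       (use sub in auto)
  moreover have "set_integrable lborel {x..y} (\<lambda>s. hg s * f s)"
    by (rule set_integrable_subset[OF L2_on_set_integrable_mult[OF domA_D(2)[OF A(2)] domA_D(1)[OF A(1)]]])
       (use sub in auto)
  ultimately have "(LINT s:{x..y}|lborel. hf s * g s - f s * hg s)
      = (LINT s:{x..y}|lborel. hf s * g s) - (LINT s:{x..y}|lborel. hg s * f s)"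
    by (simp add: set_integral_diff(2) mult.commute)
  also have "\<dots> = (y * deriv f y * g y - x * deriv f x * g x) - (y * deriv g y * f y - x * deriv g x * f x)"
  proof -
    have "(LINT s:{x..y}|lborel. s * deriv g s * deriv f s) = (LINT s:{x..y}|lborel. s * deriv f s * deriv g s)"
      by (simp add: mult.commute mult.left_commute)
    then show ?thesis
      using domA_integration_by_parts[OF A(1,2) xy] domA_integration_by_parts[OF A(2,1) xy] by simp
  qed
  finally show ?thesis by (simp add: algebra_simps)
qed

text \<open>The flux is O(sqrt x) while f and g grow at most like ln x.\<close>

lemma domA_boundary_term_tendsto_at_right_0:
  assumes A: "domA l f hf" "domA l g hg" and "0 < l"
  shows "((\<lambda>x. x * deriv f x * g x - f x * (x * deriv g x)) \<longlongrightarrow> 0) (at_right 0)"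
proof -
  obtain Kf where Kf: "\<And>x. 0 < x \<Longrightarrow> x < l \<Longrightarrow> \<bar>x * deriv f x\<bar> \<le> Kf * sqrt x"
    using domA_flux_le_sqrt[OF A(1)] by blast
  obtain Kg where Kg: "\<And>x. 0 < x \<Longrightarrow> x < l \<Longrightarrow> \<bar>x * deriv g x\<bar> \<le> Kg * sqrt x"
    using domA_flux_le_sqrt[OF A(2)] by blast
  define bf where "bf x = \<bar>f (l/2)\<bar> + ((LINT s:{0<..<l}|lborel. s * (deriv f s)\<^sup>2) + (ln (l/2) - ln x)) / 2" for x
  define bg where "bg x = \<bar>g (l/2)\<bar> + ((LINT s:{0<..<l}|lborel. s * (deriv g s)\<^sup>2) + (ln (l/2) - ln x)) / 2" for x
  define R where "R x = Kf * sqrt x * bg x + bf x * (Kg * sqrt x)" for x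
  have "eventually (\<lambda>x. norm (x * deriv f x * g x - f x * (x * deriv g x)) \<le> R x) (at_right 0)"
    unfolding eventually_at_right_field
  proof (intro exI[of _ "l/2"] conjI allI impI)
    show "0 < l/2" using \<open>0 < l\<close> by simp
    fix x :: real assume x: "0 < x" "x < l/2"
    have "\<bar>x * deriv f x * g x\<bar> \<le> Kf * sqrt x * bg x"
      unfolding abs_mult[of "x * deriv f x"] bg_def
      by (rule mult_mono) (use Kf[of x] domA_log_bound[OF A(2), of x] x in auto)
    moreover have "\<bar>f x * (x * deriv g x)\<bar> \<le> bf x * (Kg * sqrt x)"
      unfolding abs_mult[of "f x"] bf_def
      by (rule mult_mono) (use domA_log_bound[OF A(1), of x] Kg[of x] x in auto)
    ultimately show "norm (x * deriv f x * g x - f x * (x * deriv g x)) \<le> R x"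
      unfolding R_def by simp
  qed
  moreover have "(R \<longlongrightarrow> 0) (at_right 0)"
  proof -
    have lim: "((\<lambda>x. c * sqrt x - d * (sqrt x * ln x)) \<longlongrightarrow> 0) (at_right 0)" for c d :: real
      by real_asymp
    have "R = (\<lambda>x. (Kf * bg 1 + Kg * bf 1) * sqrt x - ((Kf + Kg) / 2) * (sqrt x * ln x))"
      unfolding R_def bf_def bg_def
      by (auto simp: algebra_simps add_divide_distrib diff_divide_distrib)
    then show ?thesis by (simp only: lim)
  qed
  ultimately show ?thesis by (rule Lim_null_comparison)
qed

lemma domA_boundary_term_tendsto_at_left:
  assumes A: "domA l f hf" "domA l g hg" and "0 < l"
  shows "((\<lambda>x. x * deriv f x * g x - f x * (x * deriv g x)) \<longlongrightarrow> 0) (at_left l)"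
proof -
  obtain Kf where Kf: "\<And>y. l/2 \<le> y \<Longrightarrow> y < l \<Longrightarrow> \<bar>y * deriv f y\<bar> \<le> Kf"
    using domA_flux_bounded_near_right[OF A(1) \<open>0 < l\<close>] by blast
  obtain Kg where Kg: "\<And>y. l/2 \<le> y \<Longrightarrow> y < l \<Longrightarrow> \<bar>y * deriv g y\<bar> \<le> Kg"
    using domA_flux_bounded_near_right[OF A(2) \<open>0 < l\<close>] by blast
  have "eventually (\<lambda>y. norm (y * deriv f y * g y - f y * (y * deriv g y))
      \<le> Kf * \<bar>g y\<bar> + \<bar>f y\<bar> * Kg) (at_left l)"
    unfolding eventually_at_left_field
  proof (intro exI[of _ "l/2"] conjI allI impI)
    show "l/2 < l" using \<open>0 < l\<close> by simp
    fix y :: real assume y: "l/2 < y" "y < l"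
    have "\<bar>y * deriv f y * g y\<bar> \<le> Kf * \<bar>g y\<bar>"
      unfolding abs_mult[of "y * deriv f y"] by (rule mult_right_mono) (use Kf[of y] y in auto)
    moreover have "\<bar>f y * (y * deriv g y)\<bar> \<le> \<bar>f y\<bar> * Kg"
      unfolding abs_mult[of "f y"] by (rule mult_left_mono) (use Kg[of y] y in auto)
    ultimately show "norm (y * deriv f y * g y - f y * (y * deriv g y)) \<le> Kf * \<bar>g y\<bar> + \<bar>f y\<bar> * Kg"
      by simp
  qed
  moreover have "((\<lambda>y. Kf * \<bar>g y\<bar> + \<bar>f y\<bar> * Kg) \<longlongrightarrow> Kf * \<bar>0\<bar> + \<bar>0\<bar> * Kg) (at_left l)"
    by (intro tendsto_intros domA_tendsto_0_at_left[OF A(1)] domA_tendsto_0_at_left[OF A(2)])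
  ultimately show ?thesis by (auto intro: Lim_null_comparison)
qed

text \<open>Green's formula on [x, y], letting x \<rightarrow> 0 and y \<rightarrow> l.\<close>

lemma domA_symmetric:
  assumes A: "domA l f hf" "domA l g hg" and "0 < l"
  shows "(LINT s:{0<..<l}|lborel. hf s * g s) = (LINT s:{0<..<l}|lborel. f s * hg s)"
proof -
  define B where "B x = x * deriv f x * g x - f x * (x * deriv g x)" for x
  have i1: "set_integrable lborel {0<..<l} (\<lambda>s. hf s * g s)"
    by (rule L2_on_set_integrable_mult[OF domA_D(2)[OF A(1)] domA_D(1)[OF A(2)]])
  have i2: "set_integrable lborel {0<..<l} (\<lambda>s. f s * hg s)"
    by (rule L2_on_set_integrable_mult[OF domA_D(1)[OF A(1)] domA_D(2)[OF A(2)]])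
  define xs where "xs n = l / (real n + 2)" for n
  define ys where "ys n = l - l / (real n + 2)" for n
  have xs_bounds: "0 < xs n" "xs n \<le> l/2" and ys_bounds: "l/2 \<le> ys n" "ys n < l" for n
    using \<open>0 < l\<close> divide_left_mono[of 2 "real n + 2" l] by (auto simp: xs_def ys_def)
  have xs_lim: "xs \<longlonglongrightarrow> 0" and ys_lim: "ys \<longlonglongrightarrow> l"
    unfolding xs_def ys_def by real_asymp+
  have "(\<lambda>n. LINT s:{xs n..ys n}|lborel. hf s * g s - f s * hg s)
      \<longlonglongrightarrow> (LINT s:{0<..<l}|lborel. hf s * g s - f s * hg s)"
    using i1 i2 xs_bounds(1) ys_bounds(2)
    by (intro set_integral_Icc_tendsto_Ioo xs_lim ys_lim set_integral_diff)
  moreover have "(\<lambda>n. LINT s:{xs n..ys n}|lborel. hf s * g s - f s * hg s) = (\<lambda>n. B (ys n) - B (xs n))"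
    unfolding B_def
    using domA_Green_Icc[OF A xs_bounds(1) order_trans[OF xs_bounds(2) ys_bounds(1)] ys_bounds(2)]
    by simp
  moreover have "(\<lambda>n. B (ys n) - B (xs n)) \<longlonglongrightarrow> 0 - 0"
  proof (intro tendsto_diff)
    show "(\<lambda>n. B (ys n)) \<longlonglongrightarrow> 0"
      using filterlim_compose[OF domA_boundary_term_tendsto_at_left[OF A \<open>0 < l\<close>]
          tendsto_imp_filterlim_at_left[OF ys_lim]] ys_bounds(2)
      unfolding B_def by simp
    show "(\<lambda>n. B (xs n)) \<longlonglongrightarrow> 0"
      using filterlim_compose[OF domA_boundary_term_tendsto_at_right_0[OF A \<open>0 < l\<close>]
          tendsto_imp_filterlim_at_right[OF xs_lim]] xs_bounds(1)
      unfolding B_def by simp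
  qed
  ultimately have "(LINT s:{0<..<l}|lborel. hf s * g s - f s * hg s) = 0"
    using LIMSEQ_unique by auto
  then show ?thesis using i1 i2 by (simp add: set_integral_diff(2))
qed

section \<open>Solutions and backward uniqueness\<close>

lemma L2_has_deriv_D:
  assumes "L2_has_deriv l T u t v"
  shows "L2_on {0<..<l} v"
    and "((\<lambda>s. LINT x:{0<..<l}|lborel. ((u s x - u t x) / (s - t) - v x)\<^sup>2) \<longlongrightarrow> 0) (at t within {0..T})"
  using assms unfolding L2_has_deriv_def sqL2_def L2_iff_L2_on by auto

lemma heat_sol_D:
  assumes "heat_sol l T a u0 u"
  shows "\<And>t. t \<in> {0..T} \<Longrightarrow> L2_on {0<..<l} (u t)"
    and "\<And>t. t \<in> {0..T} \<Longrightarrow>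
      ((\<lambda>s. LINT x:{0<..<l}|lborel. (u s x - u t x)\<^sup>2) \<longlongrightarrow> 0) (at t within {0..T})"
    and "AE x in lborel. x \<in> {0<..<l} \<longrightarrow> u 0 x = u0 x"
    and "\<And>t. t \<in> {0<..T} \<Longrightarrow> \<exists>h. domA l (u t) h \<and> L2_has_deriv l T u t (\<lambda>x. a * h x)"
  using assms unfolding heat_sol_def sqL2_def L2_iff_L2_on by auto

lemma L2_has_deriv_unique:
  assumes "L2_has_deriv l T u t v1" "L2_has_deriv l T u t v2"
    and "at t within {0..T} \<noteq> bot" "t \<in> {0..T}"
    and Lu: "\<And>s. s \<in> {0..T} \<Longrightarrow> L2_on {0<..<l} (u s)"
  shows "AE x in lborel. x \<in> {0<..<l} \<longrightarrow> v1 x = v2 x"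
proof -
  define q where "q s x = (u s x - u t x) / (s - t)" for s x
  note L2v = L2_has_deriv_D(1)[OF assms(1)] L2_has_deriv_D(1)[OF assms(2)]
  have "eventually (\<lambda>s. (LINT x:{0<..<l}|lborel. (v1 x - v2 x)\<^sup>2)
      \<le> 2 * (LINT x:{0<..<l}|lborel. (q s x - v2 x)\<^sup>2)
        + 2 * (LINT x:{0<..<l}|lborel. (q s x - v1 x)\<^sup>2)) (at t within {0..T})"
    unfolding eventually_at_filter
  proof (intro always_eventually allI impI)
    fix s assume "s \<in> {0..T}"
    then have "L2_on {0<..<l} (q s)"
      unfolding q_def[abs_def] using assms(4) by (intro L2_on_diff_quotient Lu)
    then have "L2_on {0<..<l} (\<lambda>x. q s x - v2 x)" "L2_on {0<..<l} (\<lambda>x. - 1 * (q s x - v1 x))"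
      using L2v by (auto intro: L2_on_diff L2_on_scale)
    from L2_on_square_add_le[OF this] show "(LINT x:{0<..<l}|lborel. (v1 x - v2 x)\<^sup>2)
      \<le> 2 * (LINT x:{0<..<l}|lborel. (q s x - v2 x)\<^sup>2)
        + 2 * (LINT x:{0<..<l}|lborel. (q s x - v1 x)\<^sup>2)"
      by (simp add: power2_commute)
  qed
  moreover have "((\<lambda>s. 2 * (LINT x:{0<..<l}|lborel. (q s x - v2 x)\<^sup>2)
        + 2 * (LINT x:{0<..<l}|lborel. (q s x - v1 x)\<^sup>2)) \<longlongrightarrow> 2 * 0 + 2 * 0) (at t within {0..T})"
    unfolding q_def by (intro tendsto_intros L2_has_deriv_D(2) assms(1,2))
  ultimately have "(LINT x:{0<..<l}|lborel. (v1 x - v2 x)\<^sup>2) \<le> 2 * 0 + 2 * 0"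
    by (intro tendsto_le[OF assms(3) _ tendsto_const])
  then have "(LINT x:{0<..<l}|lborel. (v1 x - v2 x)\<^sup>2) = 0"
    using set_integral_square_nonneg[of "{0<..<l}" "\<lambda>x. v1 x - v2 x"] by simp
  then show ?thesis
    using AE_eq_0_if_L2_on_square_integral_eq_0[OF L2_on_diff[OF L2v]] by simp
qed

context
  fixes l T a u0 u c
  assumes hs: "heat_sol l T a u0 u" and c: "0 < c" "c \<le> T"
begin

private lemma L2_on_u: "0 \<le> t \<Longrightarrow> t \<le> T \<Longrightarrow> L2_on {0<..<l} (u t)"
  using heat_sol_D(1)[OF hs] by simp

lemma heat_sol_inner_reflected_continuous:
  "continuous_on {0..c} (\<lambda>r. LINT x:{0<..<l}|lborel. u r x * u (c - r) x)"
  unfolding continuous_on_def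
proof
  fix r assume r: "r \<in> {0..c}"
  have fl: "filterlim (\<lambda>s. c - s) (at (c - r) within {0..T}) (at r within {0..c})"
    by (rule filterlim_diff_left_at_within) (use c in auto)
  show "((\<lambda>r. LINT x:{0<..<l}|lborel. u r x * u (c - r) x) \<longlongrightarrow>
      (LINT x:{0<..<l}|lborel. u r x * u (c - r) x)) (at r within {0..c})"
  proof (rule L2_on_inner_tendsto)
    show "eventually (\<lambda>s. L2_on {0<..<l} (u s) \<and> L2_on {0<..<l} (u (c - s))) (at r within {0..c})"
      unfolding eventually_at_filter using c by (intro always_eventually) (auto intro: L2_on_u)
    show "((\<lambda>s. LINT x:{0<..<l}|lborel. (u s x - u r x)\<^sup>2) \<longlongrightarrow> 0) (at r within {0..c})"
      by (rule tendsto_within_subset[OF heat_sol_D(2)[OF hs]]) (use r c in auto)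
    show "((\<lambda>s. LINT x:{0<..<l}|lborel. (u (c - s) x - u (c - r) x)\<^sup>2) \<longlongrightarrow> 0) (at r within {0..c})"
      using filterlim_compose[OF heat_sol_D(2)[OF hs] fl] r c by auto
  qed (use r c in \<open>auto intro: L2_on_u\<close>)
qed

text \<open>By the product rule the derivative is (a h, u(c - r)) - (u(r), a k), which vanishes by
  symmetry of the generator.\<close>

lemma heat_sol_inner_reflected_deriv_0:
  assumes "0 < l" "0 < r" "r < c"
  shows "((\<lambda>s. LINT x:{0<..<l}|lborel. u s x * u (c - s) x) has_field_derivative 0) (at r)"
proof -
  have rT: "r \<in> {0<..T}" "c - r \<in> {0<..T}" using assms c by auto
  obtain h where h: "domA l (u r) h" and dh: "L2_has_deriv l T u r (\<lambda>x. a * h x)"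
    using heat_sol_D(4)[OF hs rT(1)] by blast
  obtain k where k: "domA l (u (c - r)) k" and dk: "L2_has_deriv l T u (c - r) (\<lambda>x. a * k x)"
    using heat_sol_D(4)[OF hs rT(2)] by blast
  have at_r: "at r within {0..T} = at r" and at_cr: "at (c - r) within {0..T} = at (c - r)"
    using assms c by (auto intro!: at_within_Icc_at)
  have fl: "filterlim (\<lambda>s. c - s) (at (c - r)) (at r)"
    using filterlim_diff_left_at_within[of UNIV c UNIV r] by simp
  have "((\<lambda>s. LINT x:{0<..<l}|lborel. u s x * u (c - s) x) has_field_derivative
      (LINT x:{0<..<l}|lborel. a * h x * u (c - r) x) + (LINT x:{0<..<l}|lborel. u r x * - (a * k x))) (at r)"
  proof (rule L2_on_inner_has_field_derivative)
    have "eventually (\<lambda>s. s \<in> {0<..<c}) (at r)"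
      using assms by (intro eventually_at_in_open') auto
    then show "eventually (\<lambda>s. L2_on {0<..<l} (u s) \<and> L2_on {0<..<l} (u (c - s))) (at r)"
      by eventually_elim (use c in \<open>auto intro: L2_on_u\<close>)
    show "L2_on {0<..<l} (\<lambda>x. - (a * k x))"
      using L2_on_scale[OF domA_D(2)[OF k], of "- a"] by simp
    show "((\<lambda>s. LINT x:{0<..<l}|lborel. ((u s x - u r x) / (s - r) - a * h x)\<^sup>2) \<longlongrightarrow> 0) (at r)"
      using L2_has_deriv_D(2)[OF dh] unfolding at_r .
    show "((\<lambda>s. LINT x:{0<..<l}|lborel. ((u (c - s) x - u (c - r) x) / (s - r) - - (a * k x))\<^sup>2)
        \<longlongrightarrow> 0) (at r)"
      using L2_has_deriv_D(2)[OF dk, unfolded at_cr] by (rule L2_diff_quotient_reflect)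
    show "((\<lambda>s. LINT x:{0<..<l}|lborel. (u (c - s) x - u (c - r) x)\<^sup>2) \<longlongrightarrow> 0) (at r)"
      using filterlim_compose[OF heat_sol_D(2)[OF hs, of "c - r", unfolded at_cr] fl] rT by auto
  qed (use rT L2_has_deriv_D(1)[OF dh] in \<open>auto intro: L2_on_u\<close>)
  moreover have "(LINT x:{0<..<l}|lborel. a * h x * u (c - r) x) + (LINT x:{0<..<l}|lborel. u r x * - (a * k x)) = 0"
  proof -
    have "u r x * - (a * k x) = (- a) * (u r x * k x)" for x by simp
    then have "(LINT x:{0<..<l}|lborel. u r x * - (a * k x)) = - a * (LINT x:{0<..<l}|lborel. u r x * k x)"
      by (simp only: set_integral_mult_right)
    then show ?thesis using domA_symmetric[OF h k \<open>0 < l\<close>] by (simp add: mult.assoc)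
  qed
  ultimately show ?thesis by simp
qed

text \<open>Compare r = c/2 with r = 0 in the constant map r \<mapsto> (u(r), u(c - r)).\<close>

lemma heat_sol_sqL2_half:
  assumes "0 < l"
  shows "sqL2 l (u (c/2)) = (LINT x:{0<..<l}|lborel. u 0 x * u c x)"
proof -
  have "(\<lambda>r. LINT x:{0<..<l}|lborel. u r x * u (c - r) x) (c/2)
      = (\<lambda>r. LINT x:{0<..<l}|lborel. u r x * u (c - r) x) 0"
    using heat_sol_inner_reflected_continuous heat_sol_inner_reflected_deriv_0[OF assms] c
    by (intro DERIV_isconst2[of 0 c]) auto
  then show ?thesis by (simp add: sqL2_def power2_eq_square)
qed

end

lemma heat_sol_sqL2_eq_0_half:
  assumes hs: "heat_sol l T a u0 u" and "0 < l" "0 < c" "c \<le> T" and "sqL2 l (u c) = 0"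
  shows "sqL2 l (u (c/2)) = 0"
proof -
  have "\<bar>LINT x:{0<..<l}|lborel. u 0 x * u c x\<bar>
      \<le> sqrt (LINT x:{0<..<l}|lborel. (u 0 x)\<^sup>2) * sqrt (LINT x:{0<..<l}|lborel. (u c x)\<^sup>2)"
    using assms by (intro L2_on_Cauchy_Schwarz heat_sol_D(1)[OF hs]) auto
  then show ?thesis
    using heat_sol_sqL2_half[OF hs assms(3,4,2)] assms(5) by (simp add: sqL2_def)
qed

lemma heat_sol_sqL2_eq_0_pow:
  assumes hs: "heat_sol l T a u0 u" and "0 < l" "0 < c" "c \<le> T" and "sqL2 l (u c) = 0"
  shows "sqL2 l (u (c / 2 ^ n)) = 0"
proof (induction n)
  case 0
  then show ?case using assms(5) by simp
next
  case (Suc n)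
  have "c / 2 ^ n \<le> T"
    using assms(3,4) order_trans[OF divide_left_mono[of 1 "2 ^ n" c]] by auto
  then show ?case
    using heat_sol_sqL2_eq_0_half[OF hs assms(2) _ _ Suc.IH] assms(3) by (simp add: mult.commute)
qed

lemma heat_sol_backward_uniqueness:
  assumes hs: "heat_sol l T a u0 u" and "0 < l" "0 < c" "c \<le> T" and "sqL2 l (u c) = 0"
  shows "AE x in lborel. x \<in> {0<..<l} \<longrightarrow> u0 x = 0"
proof -
  define s where "s n = c / 2 ^ n" for n :: nat
  have s_bounds: "s n \<in> {0..T} \<and> s n \<noteq> 0" for n
    using assms(3,4) order_trans[OF divide_left_mono[of 1 "2 ^ n" c]] by (auto simp: s_def)
  have "filterlim s (at 0 within {0..T}) sequentially"
    unfolding filterlim_at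
  proof
    show "\<forall>\<^sub>F n in sequentially. s n \<in> {0..T} \<and> s n \<noteq> 0"
      using s_bounds by (intro always_eventually) blast
    show "s \<longlonglongrightarrow> 0" unfolding s_def by real_asymp
  qed
  moreover have "((\<lambda>t. LINT x:{0<..<l}|lborel. (u t x - u 0 x)\<^sup>2) \<longlongrightarrow> 0) (at 0 within {0..T})"
    using heat_sol_D(2)[OF hs, of 0] assms(3,4) by simp
  ultimately have lim: "(\<lambda>n. LINT x:{0<..<l}|lborel. (u (s n) x - u 0 x)\<^sup>2) \<longlonglongrightarrow> 0"
    by (rule filterlim_compose[rotated])
  have L2_0: "L2_on {0<..<l} (u 0)" and L2_s: "L2_on {0<..<l} (u (s n))" for n
    using s_bounds[of n] assms(3,4) heat_sol_D(1)[OF hs] by auto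
  have "(LINT x:{0<..<l}|lborel. (u (s n) x)\<^sup>2) = 0" for n
    using heat_sol_sqL2_eq_0_pow[OF assms, of n] by (simp add: s_def sqL2_def)
  from square_integral_eq_0_if_L2_limit_of_null[OF L2_0 L2_s this lim]
  have "(LINT x:{0<..<l}|lborel. (u 0 x)\<^sup>2) = 0" .
  then have "AE x in lborel. x \<in> {0<..<l} \<longrightarrow> u 0 x = 0"
    by (rule AE_eq_0_if_L2_on_square_integral_eq_0[OF L2_0])
  with heat_sol_D(3)[OF hs] show ?thesis by eventually_elim auto
qed

theorem corollary3p4:
  fixes l T a1 a2 a_low t0 :: real
    and u0 :: "real \<Rightarrow> real"
    and u1 u2 :: "real \<Rightarrow> real \<Rightarrow> real"
  assumes "l > 0" and "T > 0" and "a_low > 0" and "a1 \<ge> a_low" and "a2 \<ge> a_low"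
    and "L2 l u0" and "\<not> (AE x in lborel. x \<in> {0<..<l} \<longrightarrow> u0 x = 0)"
    and "heat_sol l T a1 u0 u1" and "heat_sol l T a2 u0 u2"
    and "t0 \<in> {0<..T}"
    and "\<exists>v. L2_has_deriv l T u1 t0 v \<and> L2_has_deriv l T u2 t0 v"
    and "\<forall>x\<in>{0<..<l}. deriv (u1 t0) x = deriv (u2 t0) x"
  shows "a1 = a2"
proof (rule ccontr)
  assume "a1 \<noteq> a2"
  have "0 < a2" and t0: "0 < t0" "t0 \<le> T" using assms(3,5,10) by auto
  have nontrivial: "at t0 within {0..T} \<noteq> bot" using t0 by (simp add: trivial_limit_within)
  obtain v where v1: "L2_has_deriv l T u1 t0 v" and v2: "L2_has_deriv l T u2 t0 v" using assms(11) by blast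
  obtain h1 where h1: "domA l (u1 t0) h1" "L2_has_deriv l T u1 t0 (\<lambda>x. a1 * h1 x)"
    using heat_sol_D(4)[OF assms(8,10)] by blast
  obtain h2 where h2: "domA l (u2 t0) h2" "L2_has_deriv l T u2 t0 (\<lambda>x. a2 * h2 x)"
    using heat_sol_D(4)[OF assms(9,10)] by blast
  have "AE x in lborel. x \<in> {0<..<l} \<longrightarrow> v x = a1 * h1 x"
    using t0 by (intro L2_has_deriv_unique[OF v1 h1(2) nontrivial] heat_sol_D(1)[OF assms(8)]) auto
  moreover have "AE x in lborel. x \<in> {0<..<l} \<longrightarrow> v x = a2 * h2 x"
    using t0 by (intro L2_has_deriv_unique[OF v2 h2(2) nontrivial] heat_sol_D(1)[OF assms(9)]) auto
  ultimately have scaled: "AE x in lborel. x \<in> {0<..<l} \<longrightarrow> h2 x = (a1 / a2) * h1 x"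
    by eventually_elim (use \<open>0 < a2\<close> in \<open>auto simp: field_simps\<close>)
  have "a1 / a2 \<noteq> 1" using \<open>a1 \<noteq> a2\<close> \<open>0 < a2\<close> by simp
  then have "\<forall>x\<in>{0<..<l}. u1 t0 x = 0"
    by (intro domA_eq_0_if_flux_const[OF h1(1) assms(1)]
        domA_flux_const_if_generator_scaled[OF h1(1) h2(1) assms(12) scaled])
  then have "sqL2 l (u1 t0) = (LINT x:{0<..<l}|lborel. 0)"
    unfolding sqL2_def by (intro set_lebesgue_integral_cong) auto
  then have "sqL2 l (u1 t0) = 0" by simp
  then show False using heat_sol_backward_uniqueness[OF assms(8,1) t0] assms(7) by simp
qed

end
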